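(* Let $\boldsymbol{\theta}=(\mu,\sigma,\tau_l,\tau_u)'$ with $\sigma>0$, $\tau_l<\tau_u$, let $n\ge1$ and $k\in\{1,\dots,n\}$. Then $\xi(n,h_l(\boldsymbol{\theta},n),h_u(\boldsymbol{\theta},n),k)=J_{\boldsymbol{\theta}}(p)$ for some $p\in[\frac{k-1}{n},\frac{k}{n}]$.
   Context: $\phi,\Phi$ are the standard normal density and distribution function; $\tau_l^*=(\tau_l-\mu)/\sigma$, $\tau_u^*=(\tau_u-\mu)/\sigma$; $J_{\boldsymbol{\theta}}(p)=\Phi^{-1}(\Phi(\tau_l^* )+p(\Phi(\tau_u^* )-\Phi(\tau_l^* )))$ for $p\in[0,1]$; $h_l(\boldsymbol{\theta},n)=n\Phi(\tau_l^* )/(\Phi(\tau_u^* )-\Phi(\tau_l^* ))$, $h_u(\boldsymbol{\theta},n)=n(1-\Phi(\tau_u^* ))/(\Phi(\tau_u^* )-\Phi(\tau_l^* ))$; for real $a,b\ge 0$, $\xi(n,a,b,k)=\Phi^{-1}(G^{-1}(0.5))$ where $G^{-1}$ is the quantile function of the $\mathrm{Beta}(a+k,\,b+n+1-k)$ distribution. *)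

theory Defs
  imports "HOL-Probability.Probability"
begin

definition Phi :: "real \<Rightarrow> real" where
  "Phi x = cdf (density lborel std_normal_density) x"

definition quantile :: "(real \<Rightarrow> real) \<Rightarrow> real \<Rightarrow> real" where
  "quantile F q = Inf {x. q \<le> F x}"

definition Phi_inv :: "real \<Rightarrow> real" where
  "Phi_inv p = quantile Phi p"

definition beta_density :: "real \<Rightarrow> real \<Rightarrow> real \<Rightarrow> real" where
  "beta_density a b t =
     (if 0 < t \<and> t < 1 then t powr (a - 1) * (1 - t) powr (b - 1) / Beta a b else 0)"

definition beta_cdf :: "real \<Rightarrow> real \<Rightarrow> real \<Rightarrow> real" where
  "beta_cdf a b x = cdf (density lborel (beta_density a b)) x"

definition J :: "real \<Rightarrow> real \<Rightarrow> real \<Rightarrow> real \<Rightarrow> real \<Rightarrow> real" where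
  "J \<mu> \<sigma> \<tau>l \<tau>u p =
     Phi_inv (Phi ((\<tau>l - \<mu>) / \<sigma>) + p * (Phi ((\<tau>u - \<mu>) / \<sigma>) - Phi ((\<tau>l - \<mu>) / \<sigma>)))"

definition h_l :: "real \<Rightarrow> real \<Rightarrow> real \<Rightarrow> real \<Rightarrow> nat \<Rightarrow> real" where
  "h_l \<mu> \<sigma> \<tau>l \<tau>u n =
     real n * Phi ((\<tau>l - \<mu>) / \<sigma>) / (Phi ((\<tau>u - \<mu>) / \<sigma>) - Phi ((\<tau>l - \<mu>) / \<sigma>))"

definition h_u :: "real \<Rightarrow> real \<Rightarrow> real \<Rightarrow> real \<Rightarrow> nat \<Rightarrow> real" where
  "h_u \<mu> \<sigma> \<tau>l \<tau>u n =
     real n * (1 - Phi ((\<tau>u - \<mu>) / \<sigma>)) / (Phi ((\<tau>u - \<mu>) / \<sigma>) - Phi ((\<tau>l - \<mu>) / \<sigma>))"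

definition xi :: "nat \<Rightarrow> real \<Rightarrow> real \<Rightarrow> nat \<Rightarrow> real" where
  "xi n a b k = Phi_inv (quantile (beta_cdf (a + real k) (b + real n + 1 - real k)) (1/2))"

end

theory Submission
  imports Defs
begin

text \<open>
  Write \<open>D = \<Phi>(\<tau>\<^sub>u\<^sup>*) - \<Phi>(\<tau>\<^sub>l\<^sup>*)\<close>.  The Beta parameters \<open>\<alpha> = h\<^sub>l + k\<close> and \<open>\<beta> = h\<^sub>u + n + 1 - k\<close>
  satisfy \<open>\<alpha> + \<beta> - 1 = n / D\<close>, so the affine map \<open>p \<mapsto> \<Phi>(\<tau>\<^sub>l\<^sup>*) + p D\<close> sends \<open>[(k-1)/n, k/n]\<close> onto
  \<open>[(\<alpha>-1)/(\<alpha>+\<beta>-1), \<alpha>/(\<alpha>+\<beta>-1)]\<close>.  It therefore suffices that the median of \<open>Beta(\<alpha>, \<beta>)\<close>,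
  \<open>\<alpha>, \<beta> > 1\<close>, lies in this interval.

  With \<open>p = \<alpha> - 1\<close>, \<open>q = \<beta> - 1\<close> and \<open>G\<close> a primitive of \<open>t\<^sup>p (1-t)\<^sup>q\<close>, the lower bound says
  \<open>2 G(L) \<le> G(0) + G(1)\<close> for \<open>L = p/(p+q+1)\<close>.  If \<open>p \<le> q + 1\<close> the kernel is larger at \<open>L + x\<close>
  than at \<open>L - x\<close>, so the mass of \<open>[0, L]\<close> is at most that of \<open>[L, 2L]\<close>.  Otherwise the Moebius map
  \<open>t \<mapsto> c\<^sup>2(1-t)/(t + c\<^sup>2(1-t))\<close>, \<open>c = p/(q+1)\<close>, fixes \<open>L\<close> and exchanges \<open>0\<close> and \<open>1\<close>, and on
  \<open>[0, L]\<close> the kernel is dominated by its pullback under this map, so the mass of \<open>[0, L]\<close> is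
  at most that of \<open>[L, 1]\<close>.  The upper bound is the lower
  bound for the reflected distribution \<open>Beta(\<beta>, \<alpha>)\<close>.
\<close>

definition beta_kernel :: "real \<Rightarrow> real \<Rightarrow> real \<Rightarrow> real" where
  "beta_kernel p q t = t powr p * (1 - t) powr q"

lemma beta_kernel_nonneg: "0 \<le> beta_kernel p q t"
  by (simp add: beta_kernel_def)

lemma beta_kernel_pos: "0 < t \<Longrightarrow> t < 1 \<Longrightarrow> 0 < beta_kernel p q t"
  by (simp add: beta_kernel_def)

lemma ln_beta_kernel: "0 < t \<Longrightarrow> t < 1 \<Longrightarrow> ln (beta_kernel p q t) = p * ln t + q * ln (1 - t)"
  by (simp add: beta_kernel_def ln_mult ln_powr)

lemma beta_kernel_reflect: "beta_kernel p q (1 - t) = beta_kernel q p t"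
  by (simp add: beta_kernel_def mult.commute)

lemma continuous_on_beta_kernel: "0 < p \<Longrightarrow> 0 < q \<Longrightarrow> continuous_on {0..1} (beta_kernel p q)"
  unfolding beta_kernel_def by (intro continuous_on_mult continuous_on_powr') (auto intro!: continuous_intros)

lemma reflection_polynomial_ineq:
  fixes p q z :: real
  assumes "0 < p" "0 < q" "p \<le> q + 1" "0 \<le> z" "z < p"
  shows "q * (q + 1) * (p\<^sup>2 - z\<^sup>2) \<le> p\<^sup>2 * ((q + 1)\<^sup>2 - z\<^sup>2)"
proof -
  have "z\<^sup>2 * (p\<^sup>2 - q\<^sup>2 - q) \<le> p\<^sup>2 * (q + 1)"
  proof (cases "p\<^sup>2 - q\<^sup>2 - q \<le> 0")
    case True
    then have "z\<^sup>2 * (p\<^sup>2 - q\<^sup>2 - q) \<le> 0" by (simp add: mult_nonneg_nonpos)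
    moreover have "0 \<le> p\<^sup>2 * (q + 1)" using assms by simp
    ultimately show ?thesis by linarith
  next
    case False
    have "z\<^sup>2 * (p\<^sup>2 - q\<^sup>2 - q) \<le> p\<^sup>2 * (p\<^sup>2 - q\<^sup>2 - q)"
      using False assms by (intro mult_right_mono power_mono) auto
    also have "\<dots> \<le> p\<^sup>2 * (q + 1)"
      using assms power_mono[of p "q + 1" 2]
      by (intro mult_left_mono) (auto simp: power2_eq_square algebra_simps)
    finally show ?thesis .
  qed
  then show ?thesis by (simp add: algebra_simps power2_eq_square)
qed

lemma reflection_log_derivative_nonneg:
  fixes p q y :: real
  defines "L \<equiv> p / (p + q + 1)"
  assumes pq: "0 < p" "0 < q" "p \<le> q + 1" and y: "0 \<le> y" "y < L"
  shows "q / (1 - L - y) + q / (1 - L + y) \<le> p / (L + y) + p / (L - y)"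
proof -
  define N where "N = p + q + 1"
  define z where "z = N * y"
  have N: "N > 0" using pq by (simp add: N_def)
  have z: "0 \<le> z" "z < p" using pq y N by (simp_all add: z_def N_def L_def field_simps)
  have pos: "p - z > 0" "q + 1 - z > 0" using z pq by auto
  have "q / (1 - L - y) + q / (1 - L + y) = N * (2 * q * (q + 1)) / ((q + 1)\<^sup>2 - z\<^sup>2)"
    using pos z N by (simp add: L_def z_def N_def field_simps power2_eq_square)
  also have "\<dots> \<le> N * (2 * p\<^sup>2) / (p\<^sup>2 - z\<^sup>2)"
  proof -
    have "(q + 1)\<^sup>2 - z\<^sup>2 = (q + 1 - z) * (q + 1 + z)" "p\<^sup>2 - z\<^sup>2 = (p - z) * (p + z)"
      by (simp_all add: power2_eq_square algebra_simps)
    then have "(q + 1)\<^sup>2 - z\<^sup>2 > 0" "p\<^sup>2 - z\<^sup>2 > 0"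
      using pos z by simp_all
    then show ?thesis
      using reflection_polynomial_ineq[OF pq z] N
      by (simp add: divide_simps)
  qed
  also have "\<dots> = p / (L + y) + p / (L - y)"
    using pos z N by (simp add: L_def z_def N_def field_simps power2_eq_square)
  finally show ?thesis .
qed

lemma beta_kernel_reflection_le:
  fixes p q x :: real
  defines "L \<equiv> p / (p + q + 1)"
  assumes pq: "0 < p" "0 < q" "p \<le> q + 1" and x: "0 < x" "x < L"
  shows "beta_kernel p q (L - x) \<le> beta_kernel p q (L + x)"
proof -
  have L: "0 < L" "2 * L \<le> 1" using pq by (simp_all add: L_def field_simps)
  define D where "D y = p * ln (L + y) + q * ln (1 - L - y) - p * ln (L - y) - q * ln (1 - L + y)" for y
  have "D 0 \<le> D x"
  proof (rule DERIV_nonneg_imp_increasing_open[of 0 x D])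
    fix y assume y: "0 < y" "y < x"
    have "L + y > 0" "1 - L - y > 0" "L - y > 0" "1 - L + y > 0" using y x L by auto
    then have "(D has_real_derivative p / (L + y) - q / (1 - L - y) + p / (L - y) - q / (1 - L + y)) (at y)"
      unfolding D_def by (auto intro!: derivative_eq_intros)
    moreover have "p / (L + y) - q / (1 - L - y) + p / (L - y) - q / (1 - L + y) \<ge> 0"
      using reflection_log_derivative_nonneg[OF pq, of y] y x by (simp add: L_def)
    ultimately show "\<exists>d. (D has_real_derivative d) (at y) \<and> 0 \<le> d" by blast
  next
    have "\<forall>y\<in>{0..x}. L + y > 0 \<and> 1 - L - y > 0 \<and> L - y > 0 \<and> 1 - L + y > 0"
      using x L by auto
    then show "continuous_on {0..x} D"
      unfolding D_def by (auto intro!: continuous_intros)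
  qed (use x in simp)
  also have "D x = ln (beta_kernel p q (L + x)) - ln (beta_kernel p q (L - x))"
    using x L by (simp add: D_def ln_beta_kernel algebra_simps)
  finally show ?thesis
    using x L by (simp add: D_def beta_kernel_pos)
qed

definition mobius_swap :: "real \<Rightarrow> real \<Rightarrow> real" where
  "mobius_swap c t = c\<^sup>2 * (1 - t) / (t + c\<^sup>2 * (1 - t))"

lemma mobius_denominator_pos:
  fixes c t :: real
  assumes "0 < c" "0 \<le> t" "t \<le> 1"
  shows "0 < t + c\<^sup>2 * (1 - t)"
proof (cases "t = 0")
  case False
  then show ?thesis using assms by (intro add_pos_nonneg) auto
qed (use assms in simp)

lemma mobius_swap_0: "0 < c \<Longrightarrow> mobius_swap c 0 = 1"
  by (simp add: mobius_swap_def)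

lemma mobius_swap_bounds:
  assumes "0 < c" "0 \<le> t" "t \<le> 1"
  shows "0 \<le> mobius_swap c t" "mobius_swap c t \<le> 1"
  using mobius_denominator_pos[OF assms] assms by (simp_all add: mobius_swap_def divide_simps)

lemma mobius_swap_strict_bounds:
  assumes "0 < c" "0 < t" "t < 1"
  shows "0 < mobius_swap c t" "mobius_swap c t < 1"
  using mobius_denominator_pos[of c t] assms by (simp_all add: mobius_swap_def divide_simps)

lemma mobius_swap_complement:
  "0 < c \<Longrightarrow> 0 \<le> t \<Longrightarrow> t \<le> 1 \<Longrightarrow> 1 - mobius_swap c t = t / (t + c\<^sup>2 * (1 - t))"
  using mobius_denominator_pos[of c t] by (simp add: mobius_swap_def field_simps)

lemma mobius_swap_has_derivative:
  assumes "0 < c" "0 < t" "t < 1"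
  shows "(mobius_swap c has_real_derivative - (c\<^sup>2 / (t + c\<^sup>2 * (1 - t))\<^sup>2)) (at t)"
proof -
  define d where "d = t + c\<^sup>2 * (1 - t)"
  have "d > 0" using mobius_denominator_pos[of c t] assms by (simp add: d_def)
  then have "(mobius_swap c has_real_derivative (- (c\<^sup>2 * d) - c\<^sup>2 * (1 - t) * (1 - c\<^sup>2)) / d\<^sup>2) (at t)"
    unfolding mobius_swap_def d_def by (auto intro!: derivative_eq_intros simp: power2_eq_square)
  moreover have "- (c\<^sup>2 * d) - c\<^sup>2 * (1 - t) * (1 - c\<^sup>2) = - c\<^sup>2"
    by (simp add: d_def algebra_simps power2_eq_square)
  ultimately show ?thesis by (simp add: d_def)
qed

lemma mobius_fixed_point:
  fixes p q :: real
  defines "c \<equiv> p / (q + 1)" and "L \<equiv> p / (p + q + 1)"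
  assumes "0 < p" "0 < q"
  shows "c * (1 - L) = L" "L + c\<^sup>2 * (1 - L) = c" "mobius_swap c L = L"
proof -
  have compl: "1 - L = (q + 1) / (p + q + 1)" and succ: "1 + c = (p + q + 1) / (q + 1)"
    using assms by (simp_all add: c_def L_def field_simps)
  show fix1: "c * (1 - L) = L"
    unfolding compl using assms by (simp add: c_def L_def)
  have "L + c\<^sup>2 * (1 - L) = L + c * (c * (1 - L))"
    by (simp add: power2_eq_square)
  also have "\<dots> = L * (1 + c)"
    unfolding fix1 by (simp add: algebra_simps)
  also have "\<dots> = c"
    unfolding succ using assms by (simp add: c_def L_def)
  finally show fix2: "L + c\<^sup>2 * (1 - L) = c" .
  have "c \<noteq> 0" using assms by (simp add: c_def)
  then show "mobius_swap c L = L"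
    unfolding mobius_swap_def fix2 using fix1 by (simp add: power2_eq_square mult.assoc)
qed

lemma mobius_polynomial_ineq:
  fixes p q t :: real
  defines "c \<equiv> p / (q + 1)"
  assumes pq: "0 < p" "0 < q" "q \<le> p" and t: "0 < t" "t < 1"
  shows "(p + q + 2) * (c\<^sup>2 - 1) * (t * (1 - t)) \<le> (p - q) * (t + c\<^sup>2 * (1 - t))"
proof -
  have c: "0 < c" using pq by (simp add: c_def)
  have "c * (q + 1) = p" using pq by (simp add: c_def)
  moreover have "(p - q) * (1 + c) - (p + q + 2) * (c - 1) = 2 * p - 2 * (c * (q + 1)) + 2"
    by (simp add: algebra_simps)
  ultimately have "(p - q) * (1 + c) - (p + q + 2) * (c - 1) = 2" by simp
  then have key: "(p - q) * (1 + c)\<^sup>2 - (p + q + 2) * (c\<^sup>2 - 1) = 2 * (1 + c)"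
    by (simp add: power2_eq_square algebra_simps)
  have "(p + q + 2) * (c\<^sup>2 - 1) * (t * (1 - t)) \<le> (p - q) * (1 + c)\<^sup>2 * (t * (1 - t))"
    using key c t by (intro mult_right_mono) auto
  also have "\<dots> \<le> (p - q) * (t + c\<^sup>2 * (1 - t))"
  proof -
    have "t + c\<^sup>2 * (1 - t) - (1 + c)\<^sup>2 * (t * (1 - t)) = (t - c * (1 - t))\<^sup>2"
      by (simp add: algebra_simps power2_eq_square)
    then have "(1 + c)\<^sup>2 * (t * (1 - t)) \<le> t + c\<^sup>2 * (1 - t)"
      by (metis diff_ge_0_iff_ge zero_le_power2)
    then show ?thesis using pq by (simp add: mult.assoc mult_left_mono)
  qed
  finally show ?thesis .
qed

lemma mobius_log_excess_nonneg:
  fixes p q t :: real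
  defines "c \<equiv> p / (q + 1)" and "L \<equiv> p / (p + q + 1)"
  assumes pq: "0 < p" "0 < q" "q \<le> p" and t: "0 < t" "t < L"
  shows "0 \<le> (2 * p + 2) * ln c + (p - q) * ln (1 - t) + (q - p) * ln t
              - (p + q + 2) * ln (t + c\<^sup>2 * (1 - t))"
    (is "0 \<le> ?E t")
proof -
  have c: "0 < c" using pq by (simp add: c_def)
  have L: "0 < L" "L < 1" using pq by (simp_all add: L_def field_simps)
  have "?E L \<le> ?E t"
  proof (rule DERIV_nonpos_imp_decreasing_open[of t L ?E])
    fix s assume s: "t < s" "s < L"
    then have s01: "0 < s" "s < 1" using t L by auto
    define d where "d = s + c\<^sup>2 * (1 - s)"
    have d: "0 < d" using mobius_denominator_pos[of c s] c s01 by (simp add: d_def)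
    have "(?E has_real_derivative - ((p - q) / (1 - s)) + (q - p) / s - (1 - c\<^sup>2) * (p + q + 2) / d) (at s)"
      using s01 d unfolding d_def by (auto intro!: derivative_eq_intros)
    moreover have "- ((p - q) / (1 - s)) + (q - p) / s - (1 - c\<^sup>2) * (p + q + 2) / d
        = ((p + q + 2) * (c\<^sup>2 - 1) * (s * (1 - s)) - (p - q) * d) / (s * (1 - s) * d)"
      using s01 d by (simp add: field_simps)
    moreover have "(p + q + 2) * (c\<^sup>2 - 1) * (s * (1 - s)) \<le> (p - q) * d"
      using mobius_polynomial_ineq[OF pq s01] by (simp add: c_def d_def)
    ultimately show "\<exists>e. (?E has_real_derivative e) (at s) \<and> e \<le> 0"
      using s01 d by (auto intro!: divide_nonpos_pos)
  next
    have "\<forall>s\<in>{t..L}. 0 < s \<and> s < 1 \<and> 0 < s + c\<^sup>2 * (1 - s)"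
      using t L c mobius_denominator_pos[of c] by force
    then show "continuous_on {t..L} ?E"
      by (auto intro!: continuous_intros)
  qed (use t in simp)
  moreover have "?E L = 0"
  proof -
    have "c * (1 - L) = L" and denom: "L + c\<^sup>2 * (1 - L) = c"
      unfolding c_def L_def by (rule mobius_fixed_point[OF pq(1,2)])+
    then have "1 - L = L / c" using c by (simp add: field_simps)
    then have "ln (1 - L) = ln L - ln c" using L c by (simp add: ln_div)
    then show ?thesis unfolding denom by (simp only:) (simp add: algebra_simps)
  qed
  ultimately show ?thesis by simp
qed

lemma beta_kernel_mobius_le:
  fixes p q t :: real
  defines "c \<equiv> p / (q + 1)" and "L \<equiv> p / (p + q + 1)"
  assumes pq: "0 < p" "0 < q" "q \<le> p" and t: "0 < t" "t < L"
  shows "beta_kernel p q t \<le> beta_kernel p q (mobius_swap c t) * (c\<^sup>2 / (t + c\<^sup>2 * (1 - t))\<^sup>2)"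
proof -
  define d where "d = t + c\<^sup>2 * (1 - t)"
  have c: "0 < c" using pq by (simp add: c_def)
  have "L < 1" using pq by (simp add: L_def field_simps)
  then have t1: "t < 1" using t by simp
  have d: "0 < d" using mobius_denominator_pos[of c t] c t t1 by (simp add: d_def)
  have phi: "0 < mobius_swap c t" "mobius_swap c t < 1"
    using mobius_swap_strict_bounds[OF c t(1) t1] .
  have ln_phi: "ln (mobius_swap c t) = 2 * ln c + ln (1 - t) - ln d"
    using c d t1 by (simp add: mobius_swap_def d_def[symmetric] ln_div ln_mult ln_realpow)
  have ln_compl: "ln (1 - mobius_swap c t) = ln t - ln d"
    using c d t t1 by (simp add: mobius_swap_complement d_def[symmetric] ln_div)
  have "ln (beta_kernel p q t)
      \<le> ln (beta_kernel p q t) + ((2 * p + 2) * ln c + (p - q) * ln (1 - t) + (q - p) * ln t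
              - (p + q + 2) * ln d)"
    using mobius_log_excess_nonneg[OF pq t[unfolded L_def]] by (simp add: c_def d_def)
  also have "\<dots> = ln (beta_kernel p q (mobius_swap c t)) + ln (c\<^sup>2 / d\<^sup>2)"
    using phi c d t t1
    by (simp add: ln_beta_kernel ln_phi ln_compl ln_div ln_realpow algebra_simps)
  also have "\<dots> = ln (beta_kernel p q (mobius_swap c t) * (c\<^sup>2 / d\<^sup>2))"
    using phi c d by (intro ln_mult_pos[symmetric]) (simp_all add: beta_kernel_pos)
  finally show ?thesis
    using phi c d t t1 by (simp add: d_def beta_kernel_pos)
qed

lemma beta_primitive_le_average_reflection:
  fixes p q :: real and G :: "real \<Rightarrow> real"
  defines "L \<equiv> p / (p + q + 1)"
  assumes pq: "0 < p" "0 < q" "p \<le> q + 1" and G_cont: "continuous_on {0..1} G"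
    and G_deriv: "\<And>x. 0 < x \<Longrightarrow> x < 1 \<Longrightarrow> (G has_real_derivative beta_kernel p q x) (at x)"
  shows "2 * G L \<le> G 0 + G 1"
proof -
  have L: "0 < L" "2 * L \<le> 1" using pq by (simp_all add: L_def field_simps)
  define K where "K y = G (L + y) + G (L - y)" for y
  have "K 0 \<le> K L"
  proof (rule DERIV_nonneg_imp_increasing_open[of 0 L K])
    fix y assume y: "0 < y" "y < L"
    have "(K has_real_derivative beta_kernel p q (L + y) * (0 + 1) + beta_kernel p q (L - y) * (0 - 1)) (at y)"
      unfolding K_def using y L
      by (intro DERIV_add DERIV_chain2[OF G_deriv]) (auto intro!: derivative_eq_intros)
    moreover have "beta_kernel p q (L - y) \<le> beta_kernel p q (L + y)"
      using beta_kernel_reflection_le[OF pq y[unfolded L_def]] by (simp add: L_def)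
    ultimately show "\<exists>d. (K has_real_derivative d) (at y) \<and> 0 \<le> d" by force
  next
    show "continuous_on {0..L} K"
      unfolding K_def using L
      by (intro continuous_on_add continuous_on_compose2[OF G_cont]) (auto intro!: continuous_intros)
  qed (use L in simp)
  moreover have "G (2 * L) \<le> G 1"
  proof (rule DERIV_nonneg_imp_increasing_open[of "2 * L" 1 G])
    fix x assume "2 * L < x" "x < 1"
    then show "\<exists>y. (G has_real_derivative y) (at x) \<and> 0 \<le> y"
      using G_deriv L beta_kernel_nonneg by (meson less_trans mult_pos_pos zero_less_numeral)
  qed (use L in \<open>auto intro: continuous_on_subset[OF G_cont]\<close>)
  ultimately show ?thesis by (simp add: K_def)
qed

lemma beta_primitive_le_average_mobius:
  fixes p q :: real and G :: "real \<Rightarrow> real"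
  defines "L \<equiv> p / (p + q + 1)"
  assumes pq: "0 < p" "0 < q" "q \<le> p" and G_cont: "continuous_on {0..1} G"
    and G_deriv: "\<And>x. 0 < x \<Longrightarrow> x < 1 \<Longrightarrow> (G has_real_derivative beta_kernel p q x) (at x)"
  shows "2 * G L \<le> G 0 + G 1"
proof -
  define c where "c = p / (q + 1)"
  have c: "0 < c" using pq by (simp add: c_def)
  have L: "0 < L" "L < 1" using pq by (simp_all add: L_def field_simps)
  define H where "H t = G (mobius_swap c t) + G t" for t
  have "H L \<le> H 0"
  proof (rule DERIV_nonpos_imp_decreasing_open[of 0 L H])
    fix t assume t: "0 < t" "t < L"
    then have t1: "t < 1" using L by simp
    define d where "d = t + c\<^sup>2 * (1 - t)"
    have "(H has_real_derivative beta_kernel p q (mobius_swap c t) * - (c\<^sup>2 / d\<^sup>2) + beta_kernel p q t) (at t)"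
      unfolding H_def d_def using mobius_swap_strict_bounds[OF c t(1) t1] t t1
      by (intro DERIV_add DERIV_chain2[OF G_deriv] mobius_swap_has_derivative c G_deriv) auto
    moreover have "beta_kernel p q t \<le> beta_kernel p q (mobius_swap c t) * (c\<^sup>2 / d\<^sup>2)"
      using beta_kernel_mobius_le[OF pq t[unfolded L_def]] by (simp add: c_def d_def)
    ultimately show "\<exists>e. (H has_real_derivative e) (at t) \<and> e \<le> 0" by force
  next
    have "continuous_on {0..L} (mobius_swap c)"
      unfolding mobius_swap_def using mobius_denominator_pos[OF c] L
      by (intro continuous_intros) (metis atLeastAtMost_iff less_irrefl order.trans less_imp_le)
    moreover have "mobius_swap c ` {0..L} \<subseteq> {0..1}"
      using mobius_swap_bounds[OF c] L by auto
    ultimately show "continuous_on {0..L} H"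
      unfolding H_def using L
      by (intro continuous_on_add continuous_on_compose2[OF G_cont]) (auto intro: continuous_on_subset[OF G_cont])
  qed (use L in simp)
  moreover have "mobius_swap c L = L"
    unfolding c_def L_def by (rule mobius_fixed_point(3)[OF pq(1,2)])
  ultimately show ?thesis by (simp add: H_def mobius_swap_0[OF c])
qed

lemma beta_primitive_le_average:
  fixes p q :: real and G :: "real \<Rightarrow> real"
  assumes "0 < p" "0 < q" "continuous_on {0..1} G"
    and "\<And>x. 0 < x \<Longrightarrow> x < 1 \<Longrightarrow> (G has_real_derivative beta_kernel p q x) (at x)"
  shows "2 * G (p / (p + q + 1)) \<le> G 0 + G 1"
  using beta_primitive_le_average_reflection[OF _ _ _ assms(3,4)]
    beta_primitive_le_average_mobius[OF _ _ _ assms(3,4)] assms(1,2)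
  by (cases "p \<le> q + 1") auto

lemma beta_primitive_ge_average:
  fixes p q :: real and G :: "real \<Rightarrow> real"
  assumes pq: "0 < p" "0 < q" and G_cont: "continuous_on {0..1} G"
    and G_deriv: "\<And>x. 0 < x \<Longrightarrow> x < 1 \<Longrightarrow> (G has_real_derivative beta_kernel p q x) (at x)"
  shows "G 0 + G 1 \<le> 2 * G ((p + 1) / (p + q + 1))"
proof -
  define G' where "G' x = - G (1 - x)" for x
  have "2 * G' (q / (q + p + 1)) \<le> G' 0 + G' 1"
  proof (rule beta_primitive_le_average[OF pq(2,1)])
    show "continuous_on {0..1} G'" unfolding G'_def
      by (intro continuous_on_minus continuous_on_compose2[OF G_cont]) (auto intro!: continuous_intros)
  next
    fix x :: real assume x: "0 < x" "x < 1"
    have "(G' has_real_derivative - (beta_kernel p q (1 - x) * (0 - 1))) (at x)"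
      unfolding G'_def using x
      by (intro DERIV_minus DERIV_chain2[OF G_deriv]) (auto intro!: derivative_eq_intros)
    then show "(G' has_real_derivative beta_kernel q p x) (at x)"
      by (simp add: beta_kernel_reflect)
  qed
  moreover have "1 - q / (q + p + 1) = (p + 1) / (p + q + 1)" using pq by (simp add: field_simps)
  ultimately show ?thesis by (simp add: G'_def)
qed

lemma Beta_real_pos: "0 < a \<Longrightarrow> 0 < b \<Longrightarrow> 0 < Beta a (b :: real)"
  by (simp add: Beta_def)

text \<open>For \<open>x < 0\<close> both sides vanish, the interval \<open>{0..x}\<close> being empty.\<close>
lemma beta_cdf_eq_integral:
  fixes a b x :: real
  assumes ab: "1 < a" "1 < b" and x: "x \<le> 1"
  shows "beta_cdf a b x = integral {0..x} (beta_kernel (a - 1) (b - 1)) / Beta a b"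
proof -
  define f where "f t = beta_kernel (a - 1) (b - 1) t / Beta a b" for t
  have B: "0 < Beta a b" using ab by (simp add: Beta_real_pos)
  have f_nonneg: "0 \<le> f t" for t using B by (simp add: f_def beta_kernel_nonneg)
  have "continuous_on {0..x} f"
    unfolding f_def using ab x B
    by (intro continuous_on_divide continuous_on_const continuous_on_subset[OF continuous_on_beta_kernel]) auto
  then have f_int: "(f has_integral integral {0..x} f) {0..x}"
    using integrable_continuous_interval has_integral_integral by blast
  have "(\<lambda>t. ennreal (beta_density a b t)) \<in> borel_measurable lborel"
    unfolding beta_density_def by measurable
  then have "emeasure (density lborel (beta_density a b)) {..x}
      = (\<integral>\<^sup>+ t. ennreal (beta_density a b t) * indicator {..x} t \<partial>lborel)"
    by (rule emeasure_density) simp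
  also have "\<dots> = (\<integral>\<^sup>+ t. ennreal (indicator {0..x} t * f t) \<partial>lborel)"
  proof (intro nn_integral_cong)
    fix t :: real
    show "ennreal (beta_density a b t) * indicator {..x} t = ennreal (indicator {0..x} t * f t)"
      using ab x by (cases "t = 1") (auto simp: beta_density_def f_def beta_kernel_def indicator_def)
  qed
  also have "\<dots> = ennreal (integral {0..x} f)"
    using f_nonneg f_int by (rule nn_integral_has_integral_lebesgue)
  finally have "beta_cdf a b x = integral {0..x} f"
    using has_integral_nonneg[OF f_int f_nonneg] by (simp add: beta_cdf_def cdf_def measure_def)
  then show ?thesis
    unfolding f_def by simp
qed

lemma quantile_between:
  fixes F :: "real \<Rightarrow> real"
  assumes below: "\<And>x. x < l \<Longrightarrow> F x < y" and above: "y \<le> F u"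
  shows "l \<le> quantile F y" "quantile F y \<le> u"
proof -
  have lower: "l \<le> x" if "y \<le> F x" for x
    using below[of x] that by (meson not_le)
  show "l \<le> quantile F y"
    unfolding quantile_def using above lower by (intro cInf_greatest) auto
  show "quantile F y \<le> u"
    unfolding quantile_def using above lower by (intro cInf_lower) (auto simp: bdd_below_def)
qed

lemma beta_median_bounds:
  fixes a b :: real
  assumes ab: "1 < a" "1 < b"
  shows "(a - 1) / (a + b - 1) \<le> quantile (beta_cdf a b) (1/2)"
    and "quantile (beta_cdf a b) (1/2) \<le> a / (a + b - 1)"
proof -
  define p q where "p = a - 1" and "q = b - 1"
  have pq: "0 < p" "0 < q" using ab by (simp_all add: p_def q_def)
  define B where "B = Beta a b"
  have B: "0 < B" using ab by (simp add: B_def Beta_real_pos)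
  define G where "G x = integral {0..x} (beta_kernel p q)" for x
  have F_eq: "beta_cdf a b x = G x / B" if "x \<le> 1" for x
    using beta_cdf_eq_integral[OF ab that] by (simp add: G_def B_def p_def q_def)
  have G_deriv_within: "(G has_real_derivative beta_kernel p q x) (at x within {0..1})"
    if "x \<in> {0..1}" for x
    unfolding G_def by (rule integral_has_real_derivative[OF continuous_on_beta_kernel[OF pq] that])
  then have G_cont: "continuous_on {0..1} G"
    by (meson DERIV_continuous continuous_on_eq_continuous_within)
  have G_deriv: "(G has_real_derivative beta_kernel p q x) (at x)" if "0 < x" "x < 1" for x
    using G_deriv_within[of x] that by (simp add: at_within_Icc_at)
  have G_0: "G 0 = 0" by (simp add: G_def)
  have G_1: "G 1 = B"
    using has_integral_Beta_real[of a b] ab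
    by (simp add: G_def B_def p_def q_def beta_kernel_def[abs_def] integral_unique)
  define L U where "L = (a - 1) / (a + b - 1)" and "U = a / (a + b - 1)"
  have L: "0 < L" "L < 1" and U: "U \<le> 1" using ab by (simp_all add: L_def U_def field_simps)
  have "2 * G L \<le> G 0 + G 1"
    using beta_primitive_le_average[OF pq G_cont G_deriv] by (simp add: L_def p_def q_def)
  then have F_L: "beta_cdf a b L \<le> 1/2" using B L F_eq[of L] by (simp add: G_0 G_1 pos_divide_le_eq)
  have "G 0 + G 1 \<le> 2 * G U"
    using beta_primitive_ge_average[OF pq G_cont G_deriv] by (simp add: U_def p_def q_def)
  then have F_U: "1/2 \<le> beta_cdf a b U" using B U F_eq[of U] by (simp add: G_0 G_1 pos_le_divide_eq)
  have below: "beta_cdf a b x < 1/2" if x: "x < L" for x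
  proof (cases "x < 0")
    case True
    then show ?thesis using F_eq[of x] L x by (simp add: G_def)
  next
    case False
    have "G x < G L"
    proof (rule DERIV_pos_imp_increasing_open[OF x])
      fix y assume "x < y" "y < L"
      then show "\<exists>d. (G has_real_derivative d) (at y) \<and> 0 < d"
        using False L G_deriv beta_kernel_pos by (meson le_less_trans not_le order.strict_trans)
    qed (use False L in \<open>auto intro: continuous_on_subset[OF G_cont]\<close>)
    then show ?thesis using F_eq[of x] F_eq[of L] F_L B L x by (simp add: divide_strict_right_mono)
  qed
  then show "(a - 1) / (a + b - 1) \<le> quantile (beta_cdf a b) (1/2)"
    and "quantile (beta_cdf a b) (1/2) \<le> a / (a + b - 1)"
    using quantile_between[of L "beta_cdf a b", OF below F_U] unfolding L_def U_def by auto
qed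

lemma real_distribution_std_normal: "real_distribution (density lborel std_normal_density)"
  unfolding real_distribution_def real_distribution_axioms_def
  using prob_space_normal_density[of 1 0] by simp

lemma Phi_less_mono:
  fixes x y :: real
  assumes "x < y"
  shows "Phi x < Phi y"
proof -
  define N where "N = density lborel std_normal_density"
  interpret real_distribution N unfolding N_def by (rule real_distribution_std_normal)
  have "emeasure N {x<..y} \<noteq> 0"
  proof
    assume "emeasure N {x<..y} = 0"
    then have "(\<integral>\<^sup>+ t. ennreal (std_normal_density t) * indicator {x<..y} t \<partial>lborel) = 0"
      by (simp add: N_def emeasure_density)
    then have "AE t in lborel. ennreal (std_normal_density t) * indicator {x<..y} t = 0"
      by (simp add: nn_integral_0_iff_AE)
    then have "AE t in lborel. t \<notin> {x<..y}"
      by eventually_elim (auto simp: std_normal_density_def indicator_def split: if_splits)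
    then have "emeasure lborel {x<..y} = 0"
      by (subst (asm) AE_iff_measurable[of "{x<..y}"]) auto
    with assms show False by simp
  qed
  then have "0 < measure N {x<..y}"
    by (simp add: emeasure_eq_measure zero_less_measure_iff)
  also have "measure N {x<..y} = Phi y - Phi x"
    unfolding Phi_def N_def[symmetric] by (rule cdf_diff_eq[OF assms, symmetric])
  finally show ?thesis by simp
qed

lemma Phi_pos: "0 < Phi x" and Phi_less_1: "Phi x < 1"
proof -
  interpret real_distribution "density lborel std_normal_density"
    by (rule real_distribution_std_normal)
  show "0 < Phi x"
    using Phi_less_mono[of "x - 1" x] cdf_nonneg[of "x - 1"] by (simp add: Phi_def)
  show "Phi x < 1"
    using Phi_less_mono[of x "x + 1"] cdf_bounded_prob[of "x + 1"] by (simp add: Phi_def)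
qed

lemma beta_median_in_segment:
  fixes l u :: real and n k :: nat
  assumes lu: "0 < l" "l < u" "u < 1" and k: "1 \<le> k" "k \<le> n"
  shows "\<exists>p \<in> {(real k - 1) / real n .. real k / real n}.
           quantile (beta_cdf (real n * l / (u - l) + real k) (real n * (1 - u) / (u - l) + real n + 1 - real k))
             (1/2) = l + p * (u - l)"
proof -
  define D where "D = u - l"
  define a b where "a = real n * l / D + real k" and "b = real n * (1 - u) / D + real n + 1 - real k"
  define m where "m = quantile (beta_cdf a b) (1/2)"
  have D: "0 < D" and n: "0 < real n" using lu k by (simp_all add: D_def)
  have "0 < real n * l / D" "0 < real n * (1 - u) / D" using lu D n by simp_all
  then have ab: "1 < a" "1 < b" using k by (simp_all add: a_def b_def)
  have "a + b - 1 = real n * (l + (1 - u) + D) / D"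
    using D by (simp add: a_def b_def field_simps)
  also have "\<dots> = real n / D" by (simp add: D_def)
  finally have "a + b - 1 = real n / D" .
  then have "(a - 1) / (a + b - 1) = l + (real k - 1) / real n * D"
    and "a / (a + b - 1) = l + real k / real n * D"
    using D n by (simp_all add: a_def field_simps)
  then have "(real k - 1) / real n * D \<le> m - l" "m - l \<le> real k / real n * D"
    using beta_median_bounds[OF ab] by (simp_all add: m_def)
  then have "(m - l) / D \<in> {(real k - 1) / real n .. real k / real n}"
    using D by (simp add: pos_le_divide_eq pos_divide_le_eq)
  moreover have "m = l + (m - l) / D * (u - l)" using D by (simp add: D_def)
  ultimately show ?thesis unfolding m_def a_def b_def D_def by blast
qed

theorem mainTheorem7:
  fixes \<mu> \<sigma> \<tau>l \<tau>u :: real and n k :: nat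
  assumes "\<sigma> > 0" and "\<tau>l < \<tau>u" and "n \<ge> 1" and "1 \<le> k" and "k \<le> n"
  shows "\<exists>p \<in> {(real k - 1) / real n .. real k / real n}.
           xi n (h_l \<mu> \<sigma> \<tau>l \<tau>u n) (h_u \<mu> \<sigma> \<tau>l \<tau>u n) k = J \<mu> \<sigma> \<tau>l \<tau>u p"
proof -
  define l u where "l = Phi ((\<tau>l - \<mu>) / \<sigma>)" and "u = Phi ((\<tau>u - \<mu>) / \<sigma>)"
  have "(\<tau>l - \<mu>) / \<sigma> < (\<tau>u - \<mu>) / \<sigma>"
    using assms(1,2) by (simp add: divide_strict_right_mono)
  then have "l < u" unfolding l_def u_def by (rule Phi_less_mono)
  then obtain p where p: "p \<in> {(real k - 1) / real n .. real k / real n}"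
    and median: "quantile (beta_cdf (real n * l / (u - l) + real k)
                   (real n * (1 - u) / (u - l) + real n + 1 - real k)) (1/2) = l + p * (u - l)"
    using beta_median_in_segment[OF Phi_pos _ Phi_less_1 assms(4,5)] unfolding l_def u_def by blast
  have "xi n (h_l \<mu> \<sigma> \<tau>l \<tau>u n) (h_u \<mu> \<sigma> \<tau>l \<tau>u n) k = J \<mu> \<sigma> \<tau>l \<tau>u p"
    using median by (simp add: xi_def h_l_def h_u_def J_def l_def u_def)
  with p show ?thesis by blast
qed

end
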